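(* Let $M$ be a strongly sofic monoid and let $A$ be a finite set. Then the monoid $\mathrm{CA}(M,A)$ is directly finite; in other words, $\mathrm{CA}(M,A)$ contains no submonoid isomorphic to the bicyclic monoid $\langle p,q : pq = 1\rangle$.
   Context: A monoid $M$ is strongly sofic if for every finite subset $K \subset M$ there exists an integer $\Delta_K \geq 1$ such that for every $\varepsilon > 0$ there exist a non-empty finite set $D$ and a map $\sigma \colon M \to \operatorname{Map}(D)$ (where $\operatorname{Map}(D)$ is the monoid of all maps $D \to D$ under composition) satisfying: (1) $\sigma(1_M) = \mathrm{Id}_D$; (2) $d_D^{\mathrm{Ham}}(\sigma(k_1k_2),\sigma(k_1)\sigma(k_2)) \leq \varepsilon$ for all $k_1,k_2 \in K$; (3) $d_D^{\mathrm{Ham}}(\sigma(k_1),\sigma(k_2)) \geq 1-\varepsilon$ for all distinct $k_1,k_2 \in K$; (4) $|\sigma(k)^{-1}(v)| \leq \Delta_K$ for all $k \in K$, $v \in D$. Here $d_D^{\mathrm{Ham}}(f,g) = \frac{1}{|D|}|\{v \in D : f(v) \neq g(v)\}|$. For a finite set $A$, $A^M$ is the set of maps $M \to A$ with the prodiscrete topology and shift action $(mx)(m') = x(m'm)$. $\mathrm{CA}(M,A)$ is the monoid (under composition) of all continuous $M$-equivariant maps $\tau \colon A^M \to A^M$ (cellular automata). A monoid is directly finite if $mm' = 1$ implies $m'm = 1$. *)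

theory Defs
  imports "HOL-Analysis.Analysis"
begin

definition ham_dist :: "nat set \<Rightarrow> (nat \<Rightarrow> nat) \<Rightarrow> (nat \<Rightarrow> nat) \<Rightarrow> real" where
  "ham_dist D f g = real (card {v \<in> D. f v \<noteq> g v}) / real (card D)"

text \<open>Finite sets D are taken (w.l.o.g., up to
bijection) as finite subsets of nat; Map(D) is represented by functions nat => nat
mapping D into D (only their values on D matter).\<close>
definition strongly_sofic :: "'m::monoid_mult itself \<Rightarrow> bool" where
  "strongly_sofic _ \<longleftrightarrow>
    (\<forall>K::'m set. finite K \<longrightarrow>
      (\<exists>\<Delta>::nat. \<Delta> \<ge> 1 \<and>
        (\<forall>\<epsilon>::real. \<epsilon> > 0 \<longrightarrow>
          (\<exists>(D::nat set) (\<sigma>::'m \<Rightarrow> nat \<Rightarrow> nat).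
             finite D \<and> D \<noteq> {} \<and>
             (\<forall>m. \<forall>v\<in>D. \<sigma> m v \<in> D) \<and>
             (\<forall>v\<in>D. \<sigma> 1 v = v) \<and>
             (\<forall>k1\<in>K. \<forall>k2\<in>K. ham_dist D (\<sigma> (k1 * k2)) (\<sigma> k1 \<circ> \<sigma> k2) \<le> \<epsilon>) \<and>
             (\<forall>k1\<in>K. \<forall>k2\<in>K. k1 \<noteq> k2 \<longrightarrow> ham_dist D (\<sigma> k1) (\<sigma> k2) \<ge> 1 - \<epsilon>) \<and>
             (\<forall>k\<in>K. \<forall>v\<in>D. card {u \<in> D. \<sigma> k u = v} \<le> \<Delta>)))))"

definition config_top :: "'m itself \<Rightarrow> 'a set \<Rightarrow> ('m \<Rightarrow> 'a) topology" where
  "config_top _ A = product_topology (\<lambda>_::'m. discrete_topology A) UNIV"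

definition shift :: "'m::monoid_mult \<Rightarrow> ('m \<Rightarrow> 'a) \<Rightarrow> ('m \<Rightarrow> 'a)" where
  "shift m x = (\<lambda>m'. x (m' * m))"

definition CA :: "'m::monoid_mult itself \<Rightarrow> 'a set \<Rightarrow> (('m \<Rightarrow> 'a) \<Rightarrow> ('m \<Rightarrow> 'a)) set" where
  "CA M A = {\<tau>. continuous_map (config_top M A) (config_top M A) \<tau> \<and>
      (\<forall>m. \<forall>x \<in> topspace (config_top M A). \<tau> (shift m x) = shift m (\<tau> x))}"

text \<open>Direct finiteness of the monoid CA(M,A) under composition, with identity
Id_{A^M}; elements are maps A^M -> A^M, so equality is equality on A^M.\<close>
definition CA_directly_finite :: "'m::monoid_mult itself \<Rightarrow> 'a set \<Rightarrow> bool" where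
  "CA_directly_finite M A \<longleftrightarrow>
    (\<forall>\<sigma> \<in> CA M A. \<forall>\<tau> \<in> CA M A.
       (\<forall>x \<in> topspace (config_top M A). \<sigma> (\<tau> x) = x) \<longrightarrow>
       (\<forall>x \<in> topspace (config_top M A). \<tau> (\<sigma> x) = x))"

end

(*
  If \<sigma> \<circ> \<tau> = id but \<tau> \<circ> \<sigma> \<noteq> id, then \<tau> is not surjective; its image is compact, hence
  closed, so some pattern p on a finite \<Omega> \<subseteq> M occurs in no configuration \<tau> x.  Take a sofic
  approximation of M on a finite K containing \<Omega> and memory sets of \<tau> and \<sigma>, and let \<tau>_D be
  the map on A^D obtained by running the local rule of \<tau> along it.  On the set G of vertices
  where the approximation is exact, \<sigma>_D inverts \<tau>_D, so \<tau>_D takes at least |A|^|G| values.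
  On the other hand the \<Omega>-orbits of a bounded-degree independent set V \<subseteq> G are disjoint, and
  no value of \<tau>_D shows p on any of them, so there are at most
  |A|^(|D| - |V||\<Omega>|) (|A|^|\<Omega>| - 1)^|V| values.  Since |V| is a fixed fraction of |D| while
  |D - G| is an arbitrarily small fraction, the two bounds are incompatible.
*)
theory Submission
  imports Defs
begin

section \<open>Topology of the configuration space\<close>

lemma topspace_config_top: "topspace (config_top M A) = UNIV \<rightarrow> A"
  by (auto simp: config_top_def PiE_def Pi_def extensional_def)

lemma compact_space_config_top: "finite A \<Longrightarrow> compact_space (config_top M A)"
  by (simp add: config_top_def compact_space_product_topology compact_space_discrete_topology)

lemma Hausdorff_space_config_top: "Hausdorff_space (config_top M A)"
  by (simp add: config_top_def Hausdorff_space_product_topology)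

lemma openin_config_top_cylinder:
  assumes "finite F" "x \<in> UNIV \<rightarrow> A"
  shows "openin (config_top M A) {y \<in> UNIV \<rightarrow> A. \<forall>i\<in>F. y i = x i}"
proof -
  have "{y \<in> UNIV \<rightarrow> A. \<forall>i\<in>F. y i = x i} = PiE UNIV (\<lambda>i. if i \<in> F then {x i} else A)"
    using assms(2) by (auto simp: PiE_def Pi_def extensional_def split: if_splits)
  moreover have "finite {i. (if i \<in> F then {x i} else A) \<noteq> A}"
    by (rule finite_subset[OF _ assms(1)]) auto
  ultimately show ?thesis
    using assms(2) by (auto simp: config_top_def openin_PiE_gen)
qed

lemma openin_config_top_contains_cylinder:
  assumes "openin (config_top M A) U" "x \<in> U"
  obtains F where "finite F" "\<And>y. y \<in> UNIV \<rightarrow> A \<Longrightarrow> \<forall>i\<in>F. y i = x i \<Longrightarrow> y \<in> U"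
proof -
  obtain W where W: "finite {i. W i \<noteq> A}" "x \<in> PiE UNIV W" "PiE UNIV W \<subseteq> U"
    using assms unfolding config_top_def openin_product_topology_alt by fastforce
  show thesis
  proof (rule that[OF W(1)])
    fix y assume y: "y \<in> UNIV \<rightarrow> A" "\<forall>i\<in>{i. W i \<noteq> A}. y i = x i"
    have "y i \<in> W i" for i
      using y W(2) by (cases "W i = A") auto
    then show "y \<in> U" using W(3) by auto
  qed
qed

lemma continuous_map_discrete_finitely_determined:
  assumes "finite A" and f: "continuous_map (config_top TYPE('m) A) (discrete_topology B) f"
  obtains S where "finite S"
    "\<And>x y. x \<in> UNIV \<rightarrow> A \<Longrightarrow> y \<in> UNIV \<rightarrow> A \<Longrightarrow> \<forall>s\<in>S. x s = y s \<Longrightarrow> f x = f y"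
proof -
  let ?X = "config_top TYPE('m) A"
  have "\<exists>F. finite F \<and> (\<forall>y\<in>UNIV \<rightarrow> A. (\<forall>i\<in>F. y i = x i) \<longrightarrow> f y = f x)"
    if x: "x \<in> UNIV \<rightarrow> A" for x
  proof -
    have "openin ?X {y \<in> topspace ?X. f y \<in> {f x}}"
      using f x by (intro openin_continuous_map_preimage[OF f])
        (auto simp: continuous_map_def topspace_config_top)
    then obtain F where "finite F" "\<And>y. y \<in> UNIV \<rightarrow> A \<Longrightarrow> \<forall>i\<in>F. y i = x i \<Longrightarrow> f y = f x"
      by (rule openin_config_top_contains_cylinder) (use x in \<open>auto simp: topspace_config_top\<close>)
    then show ?thesis by blast
  qed
  then obtain F where F: "\<And>x. x \<in> UNIV \<rightarrow> A \<Longrightarrow> finite (F x)"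
    "\<And>x y. x \<in> UNIV \<rightarrow> A \<Longrightarrow> y \<in> UNIV \<rightarrow> A \<Longrightarrow> \<forall>i\<in>F x. y i = x i \<Longrightarrow> f y = f x"
    by metis
  define W where "W x = {y \<in> UNIV \<rightarrow> A. \<forall>i\<in>F x. y i = x i}" for x
  have "compactin ?X (topspace ?X)"
    using compact_space_config_top[OF \<open>finite A\<close>] by (simp add: compact_space_def)
  moreover have "\<forall>U\<in>W ` (UNIV \<rightarrow> A). openin ?X U"
    using F(1) by (auto simp: W_def intro!: openin_config_top_cylinder)
  moreover have "topspace ?X \<subseteq> \<Union> (W ` (UNIV \<rightarrow> A))"
    by (auto simp: topspace_config_top W_def)
  ultimately obtain C where C: "C \<subseteq> UNIV \<rightarrow> A" "finite C" "UNIV \<rightarrow> A \<subseteq> \<Union> (W ` C)"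
    unfolding compactin_def topspace_config_top by (metis finite_subset_image)
  show thesis
  proof (rule that[of "\<Union> (F ` C)"])
    show "finite (\<Union> (F ` C))" using C F(1) by auto
    fix x y assume x: "x \<in> UNIV \<rightarrow> A" and y: "y \<in> UNIV \<rightarrow> A" and xy: "\<forall>s\<in>\<Union> (F ` C). x s = y s"
    from x C(3) obtain c where c: "c \<in> C" "x \<in> W c" by auto
    then have "f x = f c" using F(2) C(1) by (auto simp: W_def)
    also have "\<dots> = f y" using F(2)[of c y] c C(1) xy y by (auto simp: W_def)
    finally show "f x = f y" .
  qed
qed

lemma finite_pattern_outside_image:
  fixes f :: "('m \<Rightarrow> 'a) \<Rightarrow> 'n \<Rightarrow> 'b"
  assumes "finite A" and f: "continuous_map (config_top TYPE('m) A) (config_top TYPE('n) B) f"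
    and y: "y \<in> UNIV \<rightarrow> B" "y \<notin> f ` (UNIV \<rightarrow> A)"
  obtains \<Omega> where "finite \<Omega>" "\<And>x. x \<in> UNIV \<rightarrow> A \<Longrightarrow> \<exists>\<omega>\<in>\<Omega>. f x \<omega> \<noteq> y \<omega>"
proof -
  let ?Y = "config_top TYPE('n) B"
  have "compactin ?Y (f ` (UNIV \<rightarrow> A))"
    using image_compactin[OF compact_space_config_top[OF \<open>finite A\<close>, unfolded compact_space_def] f]
    by (simp add: topspace_config_top)
  then have "openin ?Y (topspace ?Y - f ` (UNIV \<rightarrow> A))"
    using compactin_imp_closedin[OF Hausdorff_space_config_top] by blast
  then obtain \<Omega> where \<Omega>: "finite \<Omega>"
    "\<And>z. z \<in> UNIV \<rightarrow> B \<Longrightarrow> \<forall>i\<in>\<Omega>. z i = y i \<Longrightarrow> z \<in> topspace ?Y - f ` (UNIV \<rightarrow> A)"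
    by (rule openin_config_top_contains_cylinder) (use y in \<open>auto simp: topspace_config_top\<close>)
  show thesis
  proof (rule that[OF \<Omega>(1)])
    fix x :: "'m \<Rightarrow> 'a" assume x: "x \<in> UNIV \<rightarrow> A"
    have "f x \<in> UNIV \<rightarrow> B"
      using f x by (auto simp: continuous_map_def topspace_config_top)
    then show "\<exists>\<omega>\<in>\<Omega>. f x \<omega> \<noteq> y \<omega>" using \<Omega>(2)[of "f x"] x by blast
  qed
qed

section \<open>Memory sets of cellular automata\<close>

definition memory_set :: "'a set \<Rightarrow> (('m::monoid_mult \<Rightarrow> 'a) \<Rightarrow> 'm \<Rightarrow> 'a) \<Rightarrow> 'm set \<Rightarrow> bool" where
  "memory_set A \<tau> S \<longleftrightarrow> finite S \<and>
     (\<forall>x\<in>UNIV \<rightarrow> A. \<forall>y\<in>UNIV \<rightarrow> A. (\<forall>s\<in>S. x s = y s) \<longrightarrow> \<tau> x 1 = \<tau> y 1)"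

lemma CA_funcset: "\<tau> \<in> CA M A \<Longrightarrow> x \<in> UNIV \<rightarrow> A \<Longrightarrow> \<tau> x \<in> UNIV \<rightarrow> A"
  by (auto simp: CA_def continuous_map_def topspace_config_top)

lemma CA_shift: "\<tau> \<in> CA M A \<Longrightarrow> x \<in> UNIV \<rightarrow> A \<Longrightarrow> \<tau> (shift m x) = shift m (\<tau> x)"
  by (simp add: CA_def topspace_config_top)

lemma CA_has_memory_set:
  assumes "finite A" "\<tau> \<in> CA TYPE('m::monoid_mult) A"
  obtains S where "memory_set A \<tau> S"
proof -
  let ?X = "config_top TYPE('m) A"
  have "continuous_map ?X ?X \<tau>" using assms(2) by (simp add: CA_def)
  moreover have "continuous_map ?X (discrete_topology A) (\<lambda>x. x 1)"
    unfolding config_top_def by (rule continuous_map_product_projection) simp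
  ultimately have "continuous_map ?X (discrete_topology A) ((\<lambda>x. x 1) \<circ> \<tau>)"
    by (rule continuous_map_compose)
  then show thesis
  proof (rule continuous_map_discrete_finitely_determined[OF assms(1)])
    fix S assume "finite S"
      "\<And>x y. x \<in> UNIV \<rightarrow> A \<Longrightarrow> y \<in> UNIV \<rightarrow> A \<Longrightarrow> \<forall>s\<in>S. x s = y s \<Longrightarrow> ((\<lambda>x. x 1) \<circ> \<tau>) x = ((\<lambda>x. x 1) \<circ> \<tau>) y"
    then have "memory_set A \<tau> S" unfolding memory_set_def comp_def by blast
    then show thesis by (rule that)
  qed
qed

lemma memory_set_shift:
  assumes "\<tau> \<in> CA TYPE('m::monoid_mult) A" "memory_set A \<tau> S"
    and x: "x \<in> UNIV \<rightarrow> A" "x' \<in> UNIV \<rightarrow> A" and "\<forall>s\<in>S. x' s = x (s * j)"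
  shows "\<tau> x' 1 = \<tau> x j"
proof -
  have "shift j x \<in> UNIV \<rightarrow> A" using x(1) by (simp add: shift_def Pi_iff)
  moreover have "\<forall>s\<in>S. x' s = shift j x s" using assms(5) by (simp add: shift_def)
  ultimately have "\<tau> x' 1 = \<tau> (shift j x) 1"
    using assms(2) x(2) unfolding memory_set_def by blast
  also have "\<dots> = shift j (\<tau> x) 1" by (simp add: CA_shift[OF assms(1) x(1)])
  finally show ?thesis by (simp add: shift_def)
qed

section \<open>Sofic approximations and induced maps\<close>

definition sofic_good :: "nat set \<Rightarrow> ('m::monoid_mult \<Rightarrow> nat \<Rightarrow> nat) \<Rightarrow> 'm set \<Rightarrow> nat set" where
  "sofic_good D \<phi> K = {v \<in> D. \<forall>k1\<in>K. \<forall>k2\<in>K.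
     \<phi> (k1 * k2) v = \<phi> k1 (\<phi> k2 v) \<and> (k1 \<noteq> k2 \<longrightarrow> \<phi> k1 v \<noteq> \<phi> k2 v)}"

definition local_config :: "('m \<Rightarrow> nat \<Rightarrow> nat) \<Rightarrow> (nat \<Rightarrow> 'a) \<Rightarrow> nat \<Rightarrow> 'm \<Rightarrow> 'a" where
  "local_config \<phi> c v = (\<lambda>m. c (\<phi> m v))"

(* The map \<tau>_D of the proof sketch. *)
definition induced_map ::
    "('m::monoid_mult \<Rightarrow> nat \<Rightarrow> nat) \<Rightarrow> nat set \<Rightarrow> (('m \<Rightarrow> 'a) \<Rightarrow> 'm \<Rightarrow> 'a) \<Rightarrow> (nat \<Rightarrow> 'a) \<Rightarrow> nat \<Rightarrow> 'a" where
  "induced_map \<phi> D \<tau> c = (\<lambda>v\<in>D. \<tau> (local_config \<phi> c v) 1)"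

lemma local_config_funcset:
  "\<forall>m. \<phi> m \<in> D \<rightarrow> D \<Longrightarrow> c \<in> D \<rightarrow> A \<Longrightarrow> v \<in> D \<Longrightarrow> local_config \<phi> c v \<in> UNIV \<rightarrow> A"
  by (simp add: local_config_def Pi_iff)

lemma induced_map_PiE:
  assumes "\<tau> \<in> CA M A" "\<forall>m. \<phi> m \<in> D \<rightarrow> D" "c \<in> D \<rightarrow> A"
  shows "induced_map \<phi> D \<tau> c \<in> D \<rightarrow>\<^sub>E A"
proof -
  have "\<tau> (local_config \<phi> c v) 1 \<in> A" if "v \<in> D" for v
    using CA_funcset[OF assms(1) local_config_funcset[OF assms(2,3) that]] by (simp add: Pi_iff)
  then show ?thesis by (simp add: induced_map_def)
qed

lemma induced_map_sofic_good:
  assumes \<tau>: "\<tau> \<in> CA TYPE('m::monoid_mult) A" "memory_set A \<tau> S" "S \<subseteq> K"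
    and \<phi>: "\<forall>m. \<phi> m \<in> D \<rightarrow> D" and v: "v \<in> sofic_good D \<phi> K" and "j \<in> K" and c: "c \<in> D \<rightarrow> A"
  shows "induced_map \<phi> D \<tau> c (\<phi> j v) = \<tau> (local_config \<phi> c v) j"
proof -
  have vD: "v \<in> D" using v by (simp add: sofic_good_def)
  then have jv: "\<phi> j v \<in> D" using \<phi> by blast
  have "\<phi> (s * j) v = \<phi> s (\<phi> j v)" if "s \<in> S" for s
    using v \<open>j \<in> K\<close> \<open>S \<subseteq> K\<close> that unfolding sofic_good_def by blast
  then have "\<forall>s\<in>S. local_config \<phi> c (\<phi> j v) s = local_config \<phi> c v (s * j)"
    unfolding local_config_def by metis
  then have "\<tau> (local_config \<phi> c (\<phi> j v)) 1 = \<tau> (local_config \<phi> c v) j"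
    by (rule memory_set_shift[OF \<tau>(1,2)
          local_config_funcset[OF \<phi> c vD] local_config_funcset[OF \<phi> c jv]])
  then show ?thesis using jv unfolding induced_map_def by (metis restrict_apply')
qed

lemma induced_map_left_inverse:
  assumes \<tau>: "\<tau> \<in> CA TYPE('m::monoid_mult) A" "memory_set A \<tau> S" "S \<subseteq> K"
    and \<sigma>: "memory_set A \<sigma> T" "T \<subseteq> K"
    and inv: "\<forall>x\<in>UNIV \<rightarrow> A. \<sigma> (\<tau> x) = x"
    and \<phi>: "\<forall>m. \<phi> m \<in> D \<rightarrow> D" "\<forall>v\<in>D. \<phi> 1 v = v"
    and v: "v \<in> sofic_good D \<phi> K" and c: "c \<in> D \<rightarrow> A"
  shows "induced_map \<phi> D \<sigma> (induced_map \<phi> D \<tau> c) v = c v"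
proof -
  have vD: "v \<in> D" using v by (simp add: sofic_good_def)
  let ?x = "local_config \<phi> c v" and ?y = "local_config \<phi> (induced_map \<phi> D \<tau> c) v"
  have x: "?x \<in> UNIV \<rightarrow> A" by (rule local_config_funcset[OF \<phi>(1) c vD])
  have y: "?y \<in> UNIV \<rightarrow> A"
    by (rule local_config_funcset[OF \<phi>(1) _ vD])
      (use induced_map_PiE[OF \<tau>(1) \<phi>(1) c] in \<open>simp add: PiE_iff Pi_iff\<close>)
  have "?y t = \<tau> ?x t" if "t \<in> T" for t
    using induced_map_sofic_good[OF \<tau> \<phi>(1) v _ c, of t] that \<sigma>(2)
    unfolding local_config_def[of \<phi> "induced_map \<phi> D \<tau> c"] by blast
  then have "\<sigma> ?y 1 = \<sigma> (\<tau> ?x) 1"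
    using \<sigma>(1) y CA_funcset[OF \<tau>(1) x] unfolding memory_set_def by blast
  also have "\<dots> = ?x 1" using inv x by simp
  finally show ?thesis using vD \<phi>(2) by (simp add: induced_map_def local_config_def)
qed

lemma induced_map_avoids_pattern:
  assumes \<tau>: "\<tau> \<in> CA TYPE('m::monoid_mult) A" "memory_set A \<tau> S" "S \<subseteq> K"
    and \<phi>: "\<forall>m. \<phi> m \<in> D \<rightarrow> D" and v: "v \<in> sofic_good D \<phi> K" and "\<Omega> \<subseteq> K" and c: "c \<in> D \<rightarrow> A"
    and \<Omega>: "\<And>x. x \<in> UNIV \<rightarrow> A \<Longrightarrow> \<exists>\<omega>\<in>\<Omega>. \<tau> x \<omega> \<noteq> y \<omega>"
  shows "(\<lambda>\<omega>\<in>\<Omega>. induced_map \<phi> D \<tau> c (\<phi> \<omega> v)) \<noteq> restrict y \<Omega>"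
proof -
  have "v \<in> D" using v by (simp add: sofic_good_def)
  then obtain \<omega> where \<omega>: "\<omega> \<in> \<Omega>" "\<tau> (local_config \<phi> c v) \<omega> \<noteq> y \<omega>"
    using \<Omega> local_config_funcset[OF \<phi> c] by blast
  moreover have "induced_map \<phi> D \<tau> c (\<phi> \<omega> v) = \<tau> (local_config \<phi> c v) \<omega>"
    using induced_map_sofic_good[OF \<tau> \<phi> v _ c] \<omega>(1) \<open>\<Omega> \<subseteq> K\<close> by blast
  ultimately show ?thesis by (metis restrict_apply')
qed

lemma card_disagree_le_ham_dist:
  assumes "finite D" "ham_dist D f g \<le> \<epsilon>"
  shows "real (card {v\<in>D. f v \<noteq> g v}) \<le> \<epsilon> * real (card D)"
  using assms by (cases "D = {}") (auto simp: ham_dist_def field_simps card_gt_0_iff)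

lemma card_agree_le_ham_dist:
  assumes "finite D" "1 - \<epsilon> \<le> ham_dist D f g"
  shows "real (card {v\<in>D. f v = g v}) \<le> \<epsilon> * real (card D)"
proof (cases "D = {}")
  case False
  have "{v\<in>D. f v = g v} \<union> {v\<in>D. f v \<noteq> g v} = D" "{v\<in>D. f v = g v} \<inter> {v\<in>D. f v \<noteq> g v} = {}"
    by auto
  then have "card {v\<in>D. f v = g v} + card {v\<in>D. f v \<noteq> g v} = card D"
    using assms(1) by (metis card_Un_disjoint finite_Un)
  moreover have "(1 - \<epsilon>) * real (card D) \<le> real (card {v\<in>D. f v \<noteq> g v})"
    using assms False by (simp add: ham_dist_def field_simps card_gt_0_iff)
  ultimately show ?thesis by (simp add: algebra_simps flip: of_nat_add)
qed simp

lemma card_diff_sofic_good_le: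
  assumes "finite D" "finite K" "0 \<le> \<epsilon>"
    and mult: "\<forall>k1\<in>K. \<forall>k2\<in>K. ham_dist D (\<phi> (k1 * k2)) (\<phi> k1 \<circ> \<phi> k2) \<le> \<epsilon>"
    and sep: "\<forall>k1\<in>K. \<forall>k2\<in>K. k1 \<noteq> k2 \<longrightarrow> 1 - \<epsilon> \<le> ham_dist D (\<phi> k1) (\<phi> k2)"
  shows "real (card (D - sofic_good D \<phi> K)) \<le> 2 * real (card K) ^ 2 * \<epsilon> * real (card D)"
proof -
  define B1 where "B1 k1 k2 = {v\<in>D. \<phi> (k1 * k2) v \<noteq> (\<phi> k1 \<circ> \<phi> k2) v}" for k1 k2
  define B2 where "B2 k1 k2 = {v\<in>D. k1 \<noteq> k2 \<and> \<phi> k1 v = \<phi> k2 v}" for k1 k2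
  have "D - sofic_good D \<phi> K \<subseteq> (\<Union>(k1, k2)\<in>K \<times> K. B1 k1 k2 \<union> B2 k1 k2)"
    by (force simp: sofic_good_def B1_def B2_def)
  moreover have "finite (\<Union>(k1, k2)\<in>K \<times> K. B1 k1 k2 \<union> B2 k1 k2)"
    using assms(1,2) by (simp add: B1_def B2_def case_prod_beta)
  ultimately have "card (D - sofic_good D \<phi> K) \<le> card (\<Union>(k1, k2)\<in>K \<times> K. B1 k1 k2 \<union> B2 k1 k2)"
    by (rule card_mono[rotated])
  also have "\<dots> \<le> (\<Sum>(k1, k2)\<in>K \<times> K. card (B1 k1 k2 \<union> B2 k1 k2))"
    using card_UN_le[of "K \<times> K" "\<lambda>(k1, k2). B1 k1 k2 \<union> B2 k1 k2"] assms(2)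
    by (simp add: case_prod_beta)
  also have "\<dots> \<le> (\<Sum>(k1, k2)\<in>K \<times> K. card (B1 k1 k2) + card (B2 k1 k2))"
    by (intro sum_mono) (simp add: case_prod_beta card_Un_le)
  finally have "real (card (D - sofic_good D \<phi> K))
      \<le> (\<Sum>(k1, k2)\<in>K \<times> K. real (card (B1 k1 k2)) + real (card (B2 k1 k2)))"
    by (simp add: case_prod_beta flip: of_nat_add of_nat_sum)
  also have "\<dots> \<le> (\<Sum>(k1, k2)\<in>K \<times> K. 2 * \<epsilon> * real (card D))"
  proof (intro sum_mono, clarify)
    fix k1 k2 assume k: "k1 \<in> K" "k2 \<in> K"
    have "real (card (B1 k1 k2)) \<le> \<epsilon> * real (card D)"
      unfolding B1_def by (rule card_disagree_le_ham_dist[OF assms(1)]) (use mult k in blast)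
    moreover have "real (card (B2 k1 k2)) \<le> \<epsilon> * real (card D)"
    proof (cases "k1 = k2")
      case False
      then show ?thesis
        using card_agree_le_ham_dist[OF assms(1)] sep k by (simp add: B2_def)
    qed (simp add: B2_def assms(3))
    ultimately show "real (card (B1 k1 k2)) + real (card (B2 k1 k2)) \<le> 2 * \<epsilon> * real (card D)"
      by simp
  qed
  also have "\<dots> = 2 * real (card K) ^ 2 * \<epsilon> * real (card D)"
    by (simp add: card_cartesian_product power2_eq_square)
  finally show ?thesis .
qed

lemma nat_mult_less_of_small_fraction:
  fixes q :: real and C m n :: nat
  assumes "0 \<le> q" "0 < n" "real m \<le> q * (1 / ((q + 1) * (real C + 1))) * real n"
  shows "C * m < n"
proof -
  have "real C * real m \<le> real C * (q * (1 / ((q + 1) * (real C + 1))) * real n)"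
    using assms(3) by (rule mult_left_mono) simp
  also have "\<dots> = q / (q + 1) * (real C / (real C + 1)) * real n"
    using assms(1) by (simp add: field_simps)
  also have "\<dots> < real n"
  proof -
    have "q / (q + 1) * (real C / (real C + 1)) \<le> q / (q + 1)"
      using assms(1) by (intro mult_left_le) simp_all
    also have "\<dots> < 1" using assms(1) by simp
    finally show ?thesis using assms(2) by (metis mult_strict_right_mono mult_1 of_nat_0_less_iff)
  qed
  finally show ?thesis by (simp flip: of_nat_mult)
qed

lemma strongly_sofic_good_approx:
  fixes K :: "'m::monoid_mult set"
  assumes "strongly_sofic TYPE('m)" "finite K"
  obtains \<Delta> where "\<And>C. \<exists>D (\<phi> :: 'm \<Rightarrow> nat \<Rightarrow> nat). finite D \<and> (\<forall>m. \<phi> m \<in> D \<rightarrow> D) \<and>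
    (\<forall>v\<in>D. \<phi> 1 v = v) \<and> (\<forall>k\<in>K. \<forall>v\<in>D. card {u\<in>D. \<phi> k u = v} \<le> \<Delta>) \<and>
    C * card (D - sofic_good D \<phi> K) < card D"
proof -
  obtain \<Delta> :: nat where \<Delta>: "\<forall>\<epsilon>::real. \<epsilon> > 0 \<longrightarrow> (\<exists>D (\<phi> :: 'm \<Rightarrow> nat \<Rightarrow> nat).
     finite D \<and> D \<noteq> {} \<and> (\<forall>m. \<forall>v\<in>D. \<phi> m v \<in> D) \<and> (\<forall>v\<in>D. \<phi> 1 v = v) \<and>
     (\<forall>k1\<in>K. \<forall>k2\<in>K. ham_dist D (\<phi> (k1 * k2)) (\<phi> k1 \<circ> \<phi> k2) \<le> \<epsilon>) \<and>
     (\<forall>k1\<in>K. \<forall>k2\<in>K. k1 \<noteq> k2 \<longrightarrow> ham_dist D (\<phi> k1) (\<phi> k2) \<ge> 1 - \<epsilon>) \<and>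
     (\<forall>k\<in>K. \<forall>v\<in>D. card {u \<in> D. \<phi> k u = v} \<le> \<Delta>))"
    using assms(1)[unfolded strongly_sofic_def, rule_format, OF assms(2)]
    by (elim exE conjE) (rule that; assumption)
  show thesis
  proof (rule that)
    fix C :: nat
    define q where "q = 2 * real (card K) ^ 2"
    define \<epsilon> where "\<epsilon> = 1 / ((q + 1) * (real C + 1))"
    have q: "q \<ge> 0" by (simp add: q_def)
    then have "\<epsilon> > 0" by (simp add: \<epsilon>_def)
    then obtain D and \<phi> :: "'m \<Rightarrow> nat \<Rightarrow> nat" where D: "finite D" "D \<noteq> {}"
      and \<phi>: "\<forall>m. \<forall>v\<in>D. \<phi> m v \<in> D" "\<forall>v\<in>D. \<phi> 1 v = v"
      and ham: "\<forall>k1\<in>K. \<forall>k2\<in>K. ham_dist D (\<phi> (k1 * k2)) (\<phi> k1 \<circ> \<phi> k2) \<le> \<epsilon>"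
        "\<forall>k1\<in>K. \<forall>k2\<in>K. k1 \<noteq> k2 \<longrightarrow> 1 - \<epsilon> \<le> ham_dist D (\<phi> k1) (\<phi> k2)"
      and deg: "\<forall>k\<in>K. \<forall>v\<in>D. card {u \<in> D. \<phi> k u = v} \<le> \<Delta>"
      using \<Delta>[rule_format, OF \<open>\<epsilon> > 0\<close>] by (elim exE conjE) (rule that; assumption)
    have "real (card (D - sofic_good D \<phi> K)) \<le> q * \<epsilon> * real (card D)"
      using card_diff_sofic_good_le[OF D(1) assms(2) _ ham] \<open>\<epsilon> > 0\<close> by (simp add: q_def)
    then have "C * card (D - sofic_good D \<phi> K) < card D"
      unfolding \<epsilon>_def using q D by (intro nat_mult_less_of_small_fraction) (simp_all add: card_gt_0_iff)
    then show "\<exists>D (\<phi> :: 'm \<Rightarrow> nat \<Rightarrow> nat). finite D \<and> (\<forall>m. \<phi> m \<in> D \<rightarrow> D) \<and>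
      (\<forall>v\<in>D. \<phi> 1 v = v) \<and> (\<forall>k\<in>K. \<forall>v\<in>D. card {u\<in>D. \<phi> k u = v} \<le> \<Delta>) \<and>
      C * card (D - sofic_good D \<phi> K) < card D"
      using D(1) \<phi> deg by (intro exI[of _ D] exI[of _ \<phi>]) (simp add: Pi_iff)
  qed
qed

section \<open>Counting\<close>

lemma bounded_degree_independent_set:
  assumes "finite G" "symp R" "\<forall>v\<in>G. card {u\<in>G. R u v} \<le> d"
  shows "\<exists>V\<subseteq>G. pairwise (\<lambda>u v. \<not> R u v) V \<and> card G \<le> (d + 1) * card V"
  using assms
proof (induction "card G" arbitrary: G rule: less_induct)
  case less
  show ?case
  proof (cases "G = {}")
    case False
    then obtain v where v: "v \<in> G" by auto
    define N where "N = insert v {u\<in>G. R u v}"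
    have N: "N \<subseteq> G" "v \<in> N" "card N \<le> d + 1"
      using v less.prems(1,3) card_insert_le_m1[of "d + 1"] by (auto simp: N_def card_insert_if)
    have fin: "finite (G - N)" using less.prems(1) by simp
    have cardG: "card G = card (G - N) + card N"
      using N(1) less.prems(1) by (simp add: card_Diff_subset finite_subset card_mono)
    moreover have "card N > 0" using N(1,2) less.prems(1) by (auto simp: card_gt_0_iff finite_subset)
    moreover have "\<forall>w\<in>G - N. card {u\<in>G - N. R u w} \<le> d"
    proof
      fix w assume w: "w \<in> G - N"
      have "card {u\<in>G - N. R u w} \<le> card {u\<in>G. R u w}"
        by (rule card_mono) (use less.prems(1) in auto)
      also have "\<dots> \<le> d" using less.prems(3) w by blast
      finally show "card {u\<in>G - N. R u w} \<le> d" .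
    qed
    ultimately obtain V where V: "V \<subseteq> G - N" "pairwise (\<lambda>u v. \<not> R u v) V" "card (G - N) \<le> (d + 1) * card V"
      using less.hyps[OF _ fin less.prems(2)] by auto
    have "finite V" using V(1) fin finite_subset by blast
    moreover have "v \<notin> V" using V(1) N(2) by auto
    moreover have "\<forall>u\<in>V. \<not> R u v \<and> \<not> R v u"
      using V(1) less.prems(2) by (auto simp: N_def symp_def)
    ultimately have "insert v V \<subseteq> G \<and> pairwise (\<lambda>u v. \<not> R u v) (insert v V) \<and>
        card G \<le> (d + 1) * card (insert v V)"
      using V v N(3) cardG by (auto simp: pairwise_insert)
    then show ?thesis by blast
  qed simp
qed

lemma exists_disjoint_orbits:
  fixes \<phi> :: "'w \<Rightarrow> 'd \<Rightarrow> 'd"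
  assumes "finite D" "G \<subseteq> D" "finite \<Omega>" "\<forall>m. \<phi> m \<in> D \<rightarrow> D"
    and deg: "\<forall>\<omega>\<in>\<Omega>. \<forall>v\<in>D. card {u\<in>D. \<phi> \<omega> u = v} \<le> \<Delta>"
  shows "\<exists>V\<subseteq>G. disjoint_family_on (\<lambda>v. (\<lambda>\<omega>. \<phi> \<omega> v) ` \<Omega>) V \<and>
    card G \<le> (card \<Omega> * card \<Omega> * \<Delta> + 1) * card V"
proof -
  define R where "R u v \<longleftrightarrow> (\<lambda>\<omega>. \<phi> \<omega> u) ` \<Omega> \<inter> (\<lambda>\<omega>. \<phi> \<omega> v) ` \<Omega> \<noteq> {}" for u v
  have "symp R" by (auto simp: R_def symp_def)
  moreover have "card {u\<in>G. R u v} \<le> card \<Omega> * card \<Omega> * \<Delta>" if v: "v \<in> G" for v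
  proof -
    have "{u\<in>G. R u v} \<subseteq> (\<Union>\<omega>\<in>\<Omega>. \<Union>\<omega>'\<in>\<Omega>. {u\<in>D. \<phi> \<omega> u = \<phi> \<omega>' v})"
      using assms(2) by (auto simp: R_def)
    then have "card {u\<in>G. R u v} \<le> card (\<Union>\<omega>\<in>\<Omega>. \<Union>\<omega>'\<in>\<Omega>. {u\<in>D. \<phi> \<omega> u = \<phi> \<omega>' v})"
      by (rule card_mono[rotated]) (simp add: assms(1,3))
    also have "\<dots> \<le> (\<Sum>\<omega>\<in>\<Omega>. card (\<Union>\<omega>'\<in>\<Omega>. {u\<in>D. \<phi> \<omega> u = \<phi> \<omega>' v}))"
      by (rule card_UN_le[OF assms(3)])
    also have "\<dots> \<le> (\<Sum>\<omega>\<in>\<Omega>. \<Sum>\<omega>'\<in>\<Omega>. card {u\<in>D. \<phi> \<omega> u = \<phi> \<omega>' v})"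
      by (intro sum_mono card_UN_le assms(3))
    also have "\<dots> \<le> (\<Sum>\<omega>\<in>\<Omega>. \<Sum>\<omega>'\<in>\<Omega>. \<Delta>)"
    proof (intro sum_mono)
      fix \<omega> \<omega>' assume "\<omega> \<in> \<Omega>" "\<omega>' \<in> \<Omega>"
      moreover have "\<phi> \<omega>' v \<in> D" using assms(2,4) v by auto
      ultimately show "card {u\<in>D. \<phi> \<omega> u = \<phi> \<omega>' v} \<le> \<Delta>" using deg by blast
    qed
    finally show ?thesis by simp
  qed
  ultimately obtain V where "V \<subseteq> G" "pairwise (\<lambda>u v. \<not> R u v) V"
    "card G \<le> (card \<Omega> * card \<Omega> * \<Delta> + 1) * card V"
    using bounded_degree_independent_set[OF finite_subset[OF assms(2,1)]] by blast
  then show ?thesis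
    by (auto simp: disjoint_family_on_def pairwise_def R_def)
qed

lemma card_image_PiE_ge_left_inverse:
  assumes "finite D" "finite A" "A \<noteq> {}" "G \<subseteq> D"
    and inv: "\<forall>c\<in>D \<rightarrow>\<^sub>E A. \<forall>v\<in>G. g (f c) v = c v"
  shows "card A ^ card G \<le> card (f ` (D \<rightarrow>\<^sub>E A))"
proof -
  obtain a0 where a0: "a0 \<in> A" using assms(3) by blast
  have "G \<rightarrow>\<^sub>E A \<subseteq> (\<lambda>c'. restrict (g c') G) ` f ` (D \<rightarrow>\<^sub>E A)"
  proof
    fix h assume h: "h \<in> G \<rightarrow>\<^sub>E A"
    define c where "c = (\<lambda>v\<in>D. if v \<in> G then h v else a0)"
    have c: "c \<in> D \<rightarrow>\<^sub>E A" using h a0 by (auto simp: c_def)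
    have "restrict (g (f c)) G = h"
    proof
      fix v show "restrict (g (f c)) G v = h v"
        using inv c h assms(4) by (cases "v \<in> G") (auto simp: c_def)
    qed
    then show "h \<in> (\<lambda>c'. restrict (g c') G) ` f ` (D \<rightarrow>\<^sub>E A)" using c by blast
  qed
  moreover have "finite (f ` (D \<rightarrow>\<^sub>E A))" using assms(1,2) by (simp add: finite_PiE)
  ultimately have "card (G \<rightarrow>\<^sub>E A) \<le> card (f ` (D \<rightarrow>\<^sub>E A))"
    by (meson card_image_le card_mono finite_imageI order_trans)
  then show ?thesis
    using finite_subset[OF assms(4,1)] by (simp add: card_PiE)
qed

lemma inj_on_restrict_patterns:
  "inj_on (\<lambda>c. (restrict c (D - (\<Union>v\<in>V. e v ` \<Omega>)), \<lambda>v\<in>V. \<lambda>\<omega>\<in>\<Omega>. c (e v \<omega>))) (D \<rightarrow>\<^sub>E A)"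
proof (rule inj_onI)
  fix c1 c2 assume c: "c1 \<in> D \<rightarrow>\<^sub>E A" "c2 \<in> D \<rightarrow>\<^sub>E A"
    and eq: "(restrict c1 (D - (\<Union>v\<in>V. e v ` \<Omega>)), \<lambda>v\<in>V. \<lambda>\<omega>\<in>\<Omega>. c1 (e v \<omega>)) =
      (restrict c2 (D - (\<Union>v\<in>V. e v ` \<Omega>)), \<lambda>v\<in>V. \<lambda>\<omega>\<in>\<Omega>. c2 (e v \<omega>))"
  show "c1 = c2"
  proof
    fix x
    consider "x \<notin> D" | "x \<in> D - (\<Union>v\<in>V. e v ` \<Omega>)" | v \<omega> where "v \<in> V" "\<omega> \<in> \<Omega>" "x = e v \<omega>"
      by blast
    then show "c1 x = c2 x"
    proof cases
      case 1 then show ?thesis using PiE_arb[OF c(1) 1] PiE_arb[OF c(2) 1] by simp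
    next
      case 2 then show ?thesis using fun_cong[OF arg_cong[OF eq, of fst], of x] by simp
    next
      case 3 then show ?thesis using fun_cong[OF fun_cong[OF arg_cong[OF eq, of snd]], of v \<omega>] by simp
    qed
  qed
qed

lemma card_avoiding_pattern_le:
  fixes e :: "'v \<Rightarrow> 'w \<Rightarrow> 'd"
  assumes "finite D" "finite A" "finite V" "finite \<Omega>"
    and inj: "\<forall>v\<in>V. inj_on (e v) \<Omega>" and sub: "\<forall>v\<in>V. e v ` \<Omega> \<subseteq> D"
    and disj: "disjoint_family_on (\<lambda>v. e v ` \<Omega>) V"
    and p: "p \<in> \<Omega> \<rightarrow>\<^sub>E A" and I: "I \<subseteq> D \<rightarrow>\<^sub>E A"
    and avoid: "\<forall>c\<in>I. \<forall>v\<in>V. (\<lambda>\<omega>\<in>\<Omega>. c (e v \<omega>)) \<noteq> p"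
  shows "card I * card A ^ (card V * card \<Omega>) \<le> card A ^ card D * (card A ^ card \<Omega> - 1) ^ card V"
proof -
  define U where "U = (\<Union>v\<in>V. e v ` \<Omega>)"
  have UD: "U \<subseteq> D" using sub by (auto simp: U_def)
  have cardU: "card U = card V * card \<Omega>"
    using card_UN_disjoint'[OF disj] assms(3,4) inj by (simp add: U_def card_image)
  define \<Phi> where "\<Phi> c = (restrict c (D - U), \<lambda>v\<in>V. \<lambda>\<omega>\<in>\<Omega>. c (e v \<omega>))" for c :: "'d \<Rightarrow> 'a"
  have "inj_on \<Phi> (D \<rightarrow>\<^sub>E A)"
    unfolding \<Phi>_def U_def by (rule inj_on_restrict_patterns)
  then have "card I = card (\<Phi> ` I)" by (simp add: card_image[OF inj_on_subset[OF _ I]])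
  also have "\<dots> \<le> card ((D - U \<rightarrow>\<^sub>E A) \<times> (V \<rightarrow>\<^sub>E (\<Omega> \<rightarrow>\<^sub>E A) - {p}))"
  proof (rule card_mono)
    show "finite ((D - U \<rightarrow>\<^sub>E A) \<times> (V \<rightarrow>\<^sub>E (\<Omega> \<rightarrow>\<^sub>E A) - {p}))"
      using assms(1-4) by (simp add: finite_PiE)
    show "\<Phi> ` I \<subseteq> (D - U \<rightarrow>\<^sub>E A) \<times> (V \<rightarrow>\<^sub>E (\<Omega> \<rightarrow>\<^sub>E A) - {p})"
    proof (rule image_subsetI)
      fix c assume "c \<in> I"
      then have c: "c \<in> D \<rightarrow> A" "\<forall>v\<in>V. (\<lambda>\<omega>\<in>\<Omega>. c (e v \<omega>)) \<noteq> p"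
        using I avoid by (auto simp: PiE_iff)
      have "(\<lambda>\<omega>\<in>\<Omega>. c (e v \<omega>)) \<in> (\<Omega> \<rightarrow>\<^sub>E A) - {p}" if "v \<in> V" for v
        using c that sub by (auto simp: Pi_iff image_subset_iff)
      then show "\<Phi> c \<in> (D - U \<rightarrow>\<^sub>E A) \<times> (V \<rightarrow>\<^sub>E (\<Omega> \<rightarrow>\<^sub>E A) - {p})"
        using c(1) by (simp add: \<Phi>_def Pi_iff)
    qed
  qed
  also have "\<dots> = card A ^ (card D - card V * card \<Omega>) * (card A ^ card \<Omega> - 1) ^ card V"
  proof -
    have "card (D - U \<rightarrow>\<^sub>E A) = card A ^ (card D - card V * card \<Omega>)"
      using assms(1) cardU finite_subset[OF UD assms(1)] by (simp add: card_PiE card_Diff_subset UD)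
    moreover have "card ((\<Omega> \<rightarrow>\<^sub>E A) - {p}) = card A ^ card \<Omega> - 1"
      using p assms(2,4) by (simp add: card_PiE finite_PiE)
    ultimately show ?thesis using assms(3) by (simp add: card_cartesian_product card_PiE)
  qed
  finally have "card I * card A ^ (card V * card \<Omega>) \<le>
      card A ^ (card D - card V * card \<Omega>) * (card A ^ card \<Omega> - 1) ^ card V * card A ^ (card V * card \<Omega>)"
    by (rule mult_le_mono1)
  also have "\<dots> = card A ^ card D * (card A ^ card \<Omega> - 1) ^ card V"
  proof -
    have "card A ^ (card D - card V * card \<Omega>) * card A ^ (card V * card \<Omega>) = card A ^ card D"
      using card_mono[OF assms(1) UD] cardU by (simp flip: power_add)
    then show ?thesis by (metis mult.assoc mult.commute)
  qed
  finally show ?thesis .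
qed

lemma exists_power_gap:
  fixes a b :: nat
  assumes "0 < b"
  obtains k where "a * (b - 1) ^ k < b ^ k"
proof -
  have "real (b - 1) / real b < 1" using assms by simp
  then obtain k where k: "(real (b - 1) / real b) ^ k < 1 / (real a + 1)"
    using real_arch_pow_inv[of "1 / (real a + 1)"] by auto
  have "(real a + 1) * real (b - 1) ^ k < real b ^ k"
    using k assms by (simp add: power_divide field_simps)
  then have "real (a * (b - 1) ^ k) < real (b ^ k)"
    by (simp add: algebra_simps) (smt (verit) zero_le_power of_nat_0_le_iff)
  then show thesis by (intro that) (simp only: of_nat_less_iff)
qed

lemma power_gap_iterate:
  fixes a b k m N :: nat
  assumes "0 < b" "a * (b - 1) ^ k < b ^ k" "k * m < N"
  shows "a ^ m * (b - 1) ^ N < b ^ N"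
proof -
  have "a ^ m * (b - 1) ^ (k * m) = (a * (b - 1) ^ k) ^ m"
    by (simp add: power_mult power_mult_distrib)
  also have "\<dots> \<le> (b ^ k) ^ m" using assms(2) by (intro power_mono) simp_all
  finally have le: "a ^ m * (b - 1) ^ (k * m) \<le> b ^ (k * m)" by (simp add: power_mult)
  have lt: "(b - 1) ^ (N - k * m) < b ^ (N - k * m)"
    using assms(1,3) by (intro power_strict_mono) auto
  have "a ^ m * (b - 1) ^ N = a ^ m * (b - 1) ^ (k * m) * (b - 1) ^ (N - k * m)"
    using assms(3) by (simp flip: power_add)
  also have "\<dots> \<le> b ^ (k * m) * (b - 1) ^ (N - k * m)" using le by (rule mult_right_mono) simp
  also have "\<dots> < b ^ (k * m) * b ^ (N - k * m)" using lt assms(1) by simp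
  also have "\<dots> = b ^ N" using assms(3) by (simp flip: power_add)
  finally show ?thesis .
qed

lemma count_bounds_contradiction:
  fixes a b k L g m N :: nat
  assumes "0 < a" "0 < b" "a * (b - 1) ^ k < b ^ k"
    and "(k * L + 1) * m < g + m" "g \<le> L * N"
    and "a ^ g * b ^ N \<le> a ^ (g + m) * (b - 1) ^ N"
  shows False
proof -
  have "k * m < N"
  proof (rule ccontr)
    assume "\<not> k * m < N"
    then have "g \<le> L * (k * m)" using assms(5) by (meson le_trans mult_le_mono2 not_less)
    then show False using assms(4) by (simp add: algebra_simps)
  qed
  then have "a ^ m * (b - 1) ^ N < b ^ N" by (rule power_gap_iterate[OF assms(2,3)])
  then have "a ^ g * (a ^ m * (b - 1) ^ N) < a ^ g * b ^ N" using assms(1) by simp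
  then show False using assms(6) by (simp add: power_add mult.assoc)
qed

section \<open>Left-invertible cellular automata over strongly sofic monoids\<close>

lemma CA_sofic_pattern_count:
  fixes \<tau> \<sigma> :: "('m::monoid_mult \<Rightarrow> 'a) \<Rightarrow> 'm \<Rightarrow> 'a"
  assumes "finite A" and \<tau>: "\<tau> \<in> CA TYPE('m) A" "memory_set A \<tau> S"
    and \<sigma>: "memory_set A \<sigma> T" and inv: "\<forall>x\<in>UNIV \<rightarrow> A. \<sigma> (\<tau> x) = x"
    and y: "y \<in> UNIV \<rightarrow> A" and \<Omega>: "finite \<Omega>" "\<And>x. x \<in> UNIV \<rightarrow> A \<Longrightarrow> \<exists>\<omega>\<in>\<Omega>. \<tau> x \<omega> \<noteq> y \<omega>"
    and K: "S \<union> T \<union> \<Omega> \<subseteq> K"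
    and D: "finite D" "\<forall>m. \<phi> m \<in> D \<rightarrow> D" "\<forall>v\<in>D. \<phi> 1 v = v"
    and V: "V \<subseteq> sofic_good D \<phi> K" "disjoint_family_on (\<lambda>v. (\<lambda>\<omega>. \<phi> \<omega> v) ` \<Omega>) V"
  shows "card A ^ card (sofic_good D \<phi> K) * (card A ^ card \<Omega>) ^ card V
    \<le> card A ^ card D * (card A ^ card \<Omega> - 1) ^ card V"
proof -
  let ?G = "sofic_good D \<phi> K" and ?I = "induced_map \<phi> D \<tau> ` (D \<rightarrow>\<^sub>E A)"
  have GD: "?G \<subseteq> D" by (auto simp: sofic_good_def)
  have SK: "S \<subseteq> K" and TK: "T \<subseteq> K" and \<Omega>K: "\<Omega> \<subseteq> K" using K by auto
  have lower: "card A ^ card ?G \<le> card ?I"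
  proof (rule card_image_PiE_ge_left_inverse[OF D(1) assms(1) _ GD])
    show "A \<noteq> {}" using y by blast
    show "\<forall>c\<in>D \<rightarrow>\<^sub>E A. \<forall>v\<in>?G. induced_map \<phi> D \<sigma> (induced_map \<phi> D \<tau> c) v = c v"
      using induced_map_left_inverse[OF \<tau> SK \<sigma> TK inv D(2,3)] by (simp add: PiE_def)
  qed
  have upper: "card ?I * card A ^ (card V * card \<Omega>) \<le> card A ^ card D * (card A ^ card \<Omega> - 1) ^ card V"
  proof (rule card_avoiding_pattern_le[OF D(1) assms(1) _ \<Omega>(1)])
    have VD: "V \<subseteq> D" using V(1) GD by blast
    then show "finite V" using D(1) finite_subset by blast
    show "\<forall>v\<in>V. inj_on (\<lambda>\<omega>. \<phi> \<omega> v) \<Omega>"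
      using V(1) \<Omega>K by (auto simp: inj_on_def sofic_good_def)
    show "\<forall>v\<in>V. (\<lambda>\<omega>. \<phi> \<omega> v) ` \<Omega> \<subseteq> D" using VD D(2) by blast
    show "restrict y \<Omega> \<in> \<Omega> \<rightarrow>\<^sub>E A" using y by (simp add: Pi_iff)
    show "?I \<subseteq> D \<rightarrow>\<^sub>E A" using induced_map_PiE[OF \<tau>(1) D(2)] by (auto simp: PiE_def)
    show "\<forall>c\<in>?I. \<forall>v\<in>V. (\<lambda>\<omega>\<in>\<Omega>. c (\<phi> \<omega> v)) \<noteq> restrict y \<Omega>"
    proof (intro ballI)
      fix c v assume "c \<in> ?I" "v \<in> V"
      then obtain c0 where "c0 \<in> D \<rightarrow> A" "c = induced_map \<phi> D \<tau> c0" by (auto simp: PiE_def)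
      then show "(\<lambda>\<omega>\<in>\<Omega>. c (\<phi> \<omega> v)) \<noteq> restrict y \<Omega>"
        using induced_map_avoids_pattern[OF \<tau> SK D(2) _ \<Omega>K _ \<Omega>(2)] \<open>v \<in> V\<close> V(1) by blast
    qed
  qed (use V(2) in simp)
  from lower have "card A ^ card ?G * card A ^ (card V * card \<Omega>) \<le> card ?I * card A ^ (card V * card \<Omega>)"
    by (rule mult_le_mono1)
  also note upper
  finally show ?thesis by (simp add: mult.commute[of "card V"] power_mult)
qed

lemma CA_left_invertible_image_dense:
  fixes \<tau> \<sigma> :: "('m::monoid_mult \<Rightarrow> 'a) \<Rightarrow> 'm \<Rightarrow> 'a"
  assumes sofic: "strongly_sofic TYPE('m)" and "finite A"
    and \<tau>: "\<tau> \<in> CA TYPE('m) A" and \<sigma>: "\<sigma> \<in> CA TYPE('m) A" and inv: "\<forall>x\<in>UNIV \<rightarrow> A. \<sigma> (\<tau> x) = x"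
    and y: "y \<in> UNIV \<rightarrow> A" and "finite \<Omega>"
  shows "\<exists>x\<in>UNIV \<rightarrow> A. \<forall>\<omega>\<in>\<Omega>. \<tau> x \<omega> = y \<omega>"
proof (rule ccontr)
  assume "\<not> ?thesis"
  then have avoid: "\<And>x. x \<in> UNIV \<rightarrow> A \<Longrightarrow> \<exists>\<omega>\<in>\<Omega>. \<tau> x \<omega> \<noteq> y \<omega>" by blast
  obtain S where S: "memory_set A \<tau> S" using CA_has_memory_set[OF \<open>finite A\<close> \<tau>] .
  obtain T where T: "memory_set A \<sigma> T" using CA_has_memory_set[OF \<open>finite A\<close> \<sigma>] .
  define K where "K = S \<union> T \<union> \<Omega>"
  have "finite K" using S T \<open>finite \<Omega>\<close> by (simp add: K_def memory_set_def)
  obtain \<Delta> where approx: "\<And>C. \<exists>D (\<phi> :: 'm \<Rightarrow> nat \<Rightarrow> nat). finite D \<and> (\<forall>m. \<phi> m \<in> D \<rightarrow> D) \<and>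
      (\<forall>v\<in>D. \<phi> 1 v = v) \<and> (\<forall>k\<in>K. \<forall>v\<in>D. card {u\<in>D. \<phi> k u = v} \<le> \<Delta>) \<and>
      C * card (D - sofic_good D \<phi> K) < card D"
    using strongly_sofic_good_approx[OF sofic \<open>finite K\<close>] by blast
  define a b where "a = card A" and "b = card A ^ card \<Omega>"
  have "A \<noteq> {}" using funcset_mem[OF y UNIV_I] by blast
  then have "a > 0" using \<open>finite A\<close> by (simp add: a_def card_gt_0_iff)
  then have "b > 0" by (simp add: a_def b_def)
  then obtain k where k: "a * (b - 1) ^ k < b ^ k" by (rule exists_power_gap)
  define L where "L = card \<Omega> * card \<Omega> * \<Delta> + 1"
  \<comment> \<open>C = k L + 1 makes |D - G| too small to compensate the gap a (b - 1)^k < b^k\<close>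
  obtain D and \<phi> :: "'m \<Rightarrow> nat \<Rightarrow> nat" where D: "finite D" "\<forall>m. \<phi> m \<in> D \<rightarrow> D" "\<forall>v\<in>D. \<phi> 1 v = v"
    and deg: "\<forall>k\<in>K. \<forall>v\<in>D. card {u\<in>D. \<phi> k u = v} \<le> \<Delta>"
    and small: "(k * L + 1) * card (D - sofic_good D \<phi> K) < card D"
    using approx[of "k * L + 1"] by (elim exE conjE) (rule that; assumption)
  let ?G = "sofic_good D \<phi> K"
  have GD: "?G \<subseteq> D" by (auto simp: sofic_good_def)
  have "\<forall>\<omega>\<in>\<Omega>. \<forall>v\<in>D. card {u\<in>D. \<phi> \<omega> u = v} \<le> \<Delta>" using deg by (simp add: K_def)
  then obtain V where V: "V \<subseteq> ?G" "disjoint_family_on (\<lambda>v. (\<lambda>\<omega>. \<phi> \<omega> v) ` \<Omega>) V"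
    "card ?G \<le> L * card V"
    using exists_disjoint_orbits[OF D(1) GD \<open>finite \<Omega>\<close> D(2)] unfolding L_def by blast
  have count: "a ^ card ?G * b ^ card V \<le> a ^ card D * (b - 1) ^ card V"
    using CA_sofic_pattern_count[OF \<open>finite A\<close> \<tau> S T inv y \<open>finite \<Omega>\<close> avoid _ D V(1,2)]
    by (simp add: K_def a_def b_def)
  have splitD: "card D = card ?G + card (D - ?G)"
    using card_Diff_subset[OF finite_subset[OF GD D(1)] GD] card_mono[OF D(1) GD] by simp
  show False
  proof (rule count_bounds_contradiction[OF \<open>a > 0\<close> \<open>b > 0\<close> k _ V(3)])
    show "(k * L + 1) * card (D - ?G) < card ?G + card (D - ?G)" using small splitD by simp
    show "a ^ card ?G * b ^ card V \<le> a ^ (card ?G + card (D - ?G)) * (b - 1) ^ card V"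
      using count splitD by simp
  qed
qed

lemma CA_surj_if_left_invertible:
  fixes \<tau> \<sigma> :: "('m::monoid_mult \<Rightarrow> 'a) \<Rightarrow> 'm \<Rightarrow> 'a"
  assumes "strongly_sofic TYPE('m)" "finite A"
    and \<tau>: "\<tau> \<in> CA TYPE('m) A" and "\<sigma> \<in> CA TYPE('m) A" "\<forall>x\<in>UNIV \<rightarrow> A. \<sigma> (\<tau> x) = x"
    and y: "y \<in> UNIV \<rightarrow> A"
  shows "y \<in> \<tau> ` (UNIV \<rightarrow> A)"
proof (rule ccontr)
  assume "y \<notin> \<tau> ` (UNIV \<rightarrow> A)"
  moreover have "continuous_map (config_top TYPE('m) A) (config_top TYPE('m) A) \<tau>"
    using \<tau> by (simp add: CA_def)
  ultimately obtain \<Omega> where \<Omega>: "finite \<Omega>" "\<And>x. x \<in> UNIV \<rightarrow> A \<Longrightarrow> \<exists>\<omega>\<in>\<Omega>. \<tau> x \<omega> \<noteq> y \<omega>"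
    using finite_pattern_outside_image[OF \<open>finite A\<close> _ y] by blast
  then show False using CA_left_invertible_image_dense[OF assms \<Omega>(1)] by blast
qed

theorem corollary1p2:
  fixes A :: "'a set"
  assumes "strongly_sofic TYPE('m::monoid_mult)"
    and "finite A"
  shows "CA_directly_finite TYPE('m) A"
  unfolding CA_directly_finite_def topspace_config_top
proof (intro ballI impI)
  fix \<sigma> \<tau> :: "('m \<Rightarrow> 'a) \<Rightarrow> 'm \<Rightarrow> 'a" and x :: "'m \<Rightarrow> 'a"
  assume \<sigma>: "\<sigma> \<in> CA TYPE('m) A" and \<tau>: "\<tau> \<in> CA TYPE('m) A"
    and inv: "\<forall>x\<in>UNIV \<rightarrow> A. \<sigma> (\<tau> x) = x" and x: "x \<in> UNIV \<rightarrow> A"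
  obtain z where "z \<in> UNIV \<rightarrow> A" "x = \<tau> z"
    using CA_surj_if_left_invertible[OF assms \<tau> \<sigma> inv x] by blast
  then show "\<tau> (\<sigma> x) = x" using inv by simp
qed

end
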